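(* Let $X,Y$ be real Banach spaces with a bilinear map $\langle\cdot,\cdot\rangle\colon X\times Y\to\mathbb{R}$ and normalized sequences $(e_j)\subset X$, $(f_j)\subset Y$ satisfying (B1)–(B5) below, and assume $(e_j)$ is $(C_u,C_s)$-subsymmetric. Let $L\in\mathbb{N}$, let $(\mathcal{B}_j)$ be a sequence of sets $\mathcal{B}_j\subset\mathbb{N}$ with $|\mathcal{B}_j|=L$ and $\max\mathcal{B}_j<\min\mathcal{B}_{j+1}$ for all $j$, and let $(\varepsilon_k)\in\{\pm1\}^{\mathbb{N}}$. Put $b_j=\sum_{k\in\mathcal{B}_j}\varepsilon_ke_k$, $d_j=\sum_{k\in\mathcal{B}_j}\varepsilon_kf_k$, and define $B,Q\colon X\to X$ by $$Bx=\sum_{j=1}^\infty\langle x,f_j\rangle b_j,\qquad Qx=\sum_{j=1}^\infty\langle x,d_j\rangle e_j,\qquad x\in X.$$ Then $B$ and $Q$ are well defined bounded operators (the series converging in $\sigma(X,Y)$), $QB=L\cdot I_X$, and $\|B\|,\|Q\|\le C_uC_s\cdot L$.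
   Context: Standing assumptions: (B1) if $\langle x,y\rangle=0$ for all $y\in Y$ then $x=0$; (B2) if $\langle x,y\rangle=0$ for all $x\in X$ then $y=0$; (B3) there is $C_d>0$ with $|\langle x,y\rangle|\le C_d\|x\|\|y\|$; (B4) $\langle e_j,f_k\rangle=1$ if $j=k$ and $0$ otherwise; (B5) every $x\in X$ has the unique representation $x=\sum_j\langle x,f_j\rangle e_j$ converging in $\sigma(X,Y)$, the topology generated by the seminorms $x\mapsto|\langle x,y\rangle|$, $y\in Y$. Series $\sum a_je_j$ are required to converge in $\sigma(X,Y)$. $(e_j)$ is $C_u$-unconditional if $\|\sum\gamma_ja_je_j\|\le C_u\sup_k|\gamma_k|\|\sum a_je_j\|$; $C_s$-spreading if for every increasing $(n_j)$, $C_s^{-1}\|\sum a_je_{n_j}\|\le\|\sum a_je_j\|\le C_s\|\sum a_je_{n_j}\|$; $(C_u,C_s)$-subsymmetric if both. *)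

theory Defs
  imports "HOL-Analysis.Analysis"
begin

text \<open>Convergence of the series sum of u j (j = 0,1,2,...) to x in the topology sigma(X,Y)
  generated by the seminorms x |-> |pair x y|, y in Y.\<close>
definition wsums :: "('x::real_vector \<Rightarrow> 'y \<Rightarrow> real) \<Rightarrow> (nat \<Rightarrow> 'x) \<Rightarrow> 'x \<Rightarrow> bool" where
  "wsums pair u x \<longleftrightarrow> (\<forall>y. (\<lambda>n. pair (\<Sum>j<n. u j) y) \<longlonglongrightarrow> pair x y)"

definition dual_pair_basis ::
  "('x::banach \<Rightarrow> 'y::banach \<Rightarrow> real) \<Rightarrow> (nat \<Rightarrow> 'x) \<Rightarrow> (nat \<Rightarrow> 'y) \<Rightarrow> bool" where
  "dual_pair_basis pair e f \<longleftrightarrow>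
     bilinear pair \<and>
     (\<forall>j. norm (e j) = 1) \<and> (\<forall>j. norm (f j) = 1) \<and>
     (\<forall>x. (\<forall>y. pair x y = 0) \<longrightarrow> x = 0) \<and>
     (\<forall>y. (\<forall>x. pair x y = 0) \<longrightarrow> y = 0) \<and>
     (\<exists>Cd>0. \<forall>x y. \<bar>pair x y\<bar> \<le> Cd * norm x * norm y) \<and>
     (\<forall>j k. pair (e j) (f k) = (if j = k then 1 else 0)) \<and>
     (\<forall>x. wsums pair (\<lambda>j. pair x (f j) *\<^sub>R e j) x) \<and>
     (\<forall>x a. wsums pair (\<lambda>j. a j *\<^sub>R e j) x \<longrightarrow> (\<forall>j. a j = pair x (f j)))"

definition unconditional_basis ::
  "('x::real_normed_vector \<Rightarrow> 'y \<Rightarrow> real) \<Rightarrow> (nat \<Rightarrow> 'x) \<Rightarrow> real \<Rightarrow> bool" where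
  "unconditional_basis pair e Cu \<longleftrightarrow>
     (\<forall>a \<gamma> x. bounded (range \<gamma>) \<longrightarrow> wsums pair (\<lambda>j. a j *\<^sub>R e j) x \<longrightarrow>
        (\<exists>z. wsums pair (\<lambda>j. (\<gamma> j * a j) *\<^sub>R e j) z \<and>
             norm z \<le> Cu * (SUP k. \<bar>\<gamma> k\<bar>) * norm x))"

definition spreading_basis ::
  "('x::real_normed_vector \<Rightarrow> 'y \<Rightarrow> real) \<Rightarrow> (nat \<Rightarrow> 'x) \<Rightarrow> real \<Rightarrow> bool" where
  "spreading_basis pair e Cs \<longleftrightarrow> 0 < Cs \<and>
     (\<forall>a n. strict_mono n \<longrightarrow>
        (\<forall>x. wsums pair (\<lambda>j. a j *\<^sub>R e j) x \<longrightarrow>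
           (\<exists>z. wsums pair (\<lambda>j. a j *\<^sub>R e (n j)) z \<and>
                inverse Cs * norm z \<le> norm x \<and> norm x \<le> Cs * norm z)) \<and>
        (\<forall>z. wsums pair (\<lambda>j. a j *\<^sub>R e (n j)) z \<longrightarrow>
           (\<exists>x. wsums pair (\<lambda>j. a j *\<^sub>R e j) x \<and>
                inverse Cs * norm z \<le> norm x \<and> norm x \<le> Cs * norm z)))"

definition subsymmetric_basis ::
  "('x::real_normed_vector \<Rightarrow> 'y \<Rightarrow> real) \<Rightarrow> (nat \<Rightarrow> 'x) \<Rightarrow> real \<Rightarrow> real \<Rightarrow> bool" where
  "subsymmetric_basis pair e Cu Cs \<longleftrightarrow> unconditional_basis pair e Cu \<and> spreading_basis pair e Cs"

end

theory Submission
  imports Defs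
begin

text \<open>Let \<open>k\<^sub>i(j)\<close> be the \<open>i\<close>-th element of \<open>B\<^sub>j\<close>; each \<open>j \<mapsto> k\<^sub>i(j)\<close> is strictly increasing.
  Then \<open>B x = \<Sum>\<^sub>i<L \<Sum>\<^sub>j \<epsilon>\<^bsub>k\<^sub>i(j)\<^esub> \<langle>x,f\<^sub>j\<rangle> e\<^bsub>k\<^sub>i(j)\<^esub>\<close>, and each inner series arises from the expansion
  of \<open>x\<close> by a change of signs (factor \<open>C\<^sub>u\<close>) followed by spreading along \<open>k\<^sub>i\<close> (factor \<open>C\<^sub>s\<close>).
  Likewise \<open>Q x = \<Sum>\<^sub>i<L \<Sum>\<^sub>j \<epsilon>\<^bsub>k\<^sub>i(j)\<^esub> \<langle>x,f\<^bsub>k\<^sub>i(j)\<^esub>\<rangle> e\<^sub>j\<close>, where the inner series is obtained by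
  projecting the expansion of \<open>x\<close> onto the coordinates \<open>k\<^sub>i(j)\<close> (unconditionality with multipliers
  in \<open>{0, \<plusminus>1}\<close>) and then removing the gaps (spreading backwards). Finally
  \<open>\<langle>B x, f\<^sub>k\<rangle> = \<epsilon>\<^sub>k \<langle>x, f\<^sub>j\<rangle>\<close> for \<open>k \<in> B\<^sub>j\<close>, hence \<open>\<langle>B x, d\<^sub>j\<rangle> = L \<langle>x, f\<^sub>j\<rangle>\<close>, and \<open>Q B x = L x\<close>
  because \<open>\<sigma>(X,Y)\<close>-limits are unique by (B1).\<close>

definition wsum :: "('x::real_vector \<Rightarrow> 'y \<Rightarrow> real) \<Rightarrow> (nat \<Rightarrow> 'x) \<Rightarrow> 'x" where
  "wsum pair u = (THE x. wsums pair u x)"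

lemma bilinear_sum_left: "bilinear h \<Longrightarrow> h (sum g S) y = (\<Sum>k\<in>S. h (g k) y)"
  using linear_sum[of "\<lambda>x. h x y" g S] by (simp add: bilinear_def)

lemma bilinear_sum_right: "bilinear h \<Longrightarrow> h x (sum g S) = (\<Sum>k\<in>S. h x (g k))"
  using linear_sum[of "h x" g S] by (simp add: bilinear_def)

lemma wsums_add:
  assumes "bilinear pair" "wsums pair u x" "wsums pair v z"
  shows "wsums pair (\<lambda>j. u j + v j) (x + z)"
  using assms unfolding wsums_def by (simp add: sum.distrib bilinear_ladd tendsto_add)

lemma wsums_scaleR:
  assumes "bilinear pair" "wsums pair u x"
  shows "wsums pair (\<lambda>j. c *\<^sub>R u j) (c *\<^sub>R x)"
  using assms unfolding wsums_def
  by (simp add: scaleR_sum_right[symmetric] bilinear_lmul tendsto_mult_left del: scaleR_sum_right)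

lemma wsums_sum:
  assumes "bilinear pair" "\<And>i. i \<in> I \<Longrightarrow> wsums pair (u i) (x i)"
  shows "wsums pair (\<lambda>j. \<Sum>i\<in>I. u i j) (\<Sum>i\<in>I. x i)"
  using assms unfolding wsums_def
  by (auto simp: sum.swap[of _ I] bilinear_sum_left intro!: tendsto_sum)

lemma wsums_sum_bounded:
  assumes "bilinear pair" "\<And>i. i \<in> I \<Longrightarrow> \<exists>z. wsums pair (u i) z \<and> norm z \<le> K"
  shows "\<exists>z. wsums pair (\<lambda>j. \<Sum>i\<in>I. u i j) z \<and> norm z \<le> real (card I) * K"
proof -
  obtain z where z: "\<And>i. i \<in> I \<Longrightarrow> wsums pair (u i) (z i) \<and> norm (z i) \<le> K"
    using assms(2) by metis
  have "norm (\<Sum>i\<in>I. z i) \<le> (\<Sum>i\<in>I. norm (z i))"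
    by (rule norm_sum)
  also have "\<dots> \<le> real (card I) * K"
    using z by (intro sum_bounded_above) auto
  finally show ?thesis
    using wsums_sum[OF assms(1), of I u z] z by blast
qed

lemma wsums_subseq:
  assumes n: "strict_mono n" and vanish: "\<And>k. k \<notin> range n \<Longrightarrow> u k = 0"
    and "wsums pair u x"
  shows "wsums pair (u \<circ> n) x"
proof -
  have partial_sums: "(\<Sum>k<n m. u k) = (\<Sum>j<m. u (n j))" for m
  proof -
    have "(\<Sum>k<n m. u k) = (\<Sum>k\<in>n ` {..<m}. u k)"
    proof (rule sum.mono_neutral_right)
      show "n ` {..<m} \<subseteq> {..<n m}"
        using n by (auto simp: strict_mono_less)
      show "\<forall>k\<in>{..<n m} - n ` {..<m}. u k = 0"
      proof
        fix k
        assume k: "k \<in> {..<n m} - n ` {..<m}"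
        show "u k = 0"
        proof (cases "k \<in> range n")
          case True
          with k n show ?thesis
            by (auto simp: strict_mono_less)
        qed (rule vanish)
      qed
    qed simp
    also have "\<dots> = (\<Sum>j<m. u (n j))"
      using strict_mono_imp_inj_on[OF n] by (simp add: sum.reindex)
    finally show ?thesis .
  qed
  show ?thesis
    unfolding wsums_def
  proof
    fix y
    have "(\<lambda>m. pair (\<Sum>k<m. u k) y) \<longlonglongrightarrow> pair x y"
      using assms(3) unfolding wsums_def by blast
    from LIMSEQ_subseq_LIMSEQ[OF this n]
    show "(\<lambda>m. pair (\<Sum>j<m. (u \<circ> n) j) y) \<longlonglongrightarrow> pair x y"
      by (simp add: partial_sums comp_def)
  qed
qed

lemma wsums_pair_single_term:
  assumes "bilinear pair" "wsums pair u x" and others: "\<And>j. j \<noteq> j0 \<Longrightarrow> pair (u j) y = 0"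
  shows "pair x y = pair (u j0) y"
proof -
  have "pair (\<Sum>j<n. u j) y = pair (u j0) y" if "j0 < n" for n
  proof -
    have "pair (\<Sum>j<n. u j) y = (\<Sum>j<n. if j = j0 then pair (u j0) y else 0)"
      unfolding bilinear_sum_left[OF assms(1)] using others by (intro sum.cong) auto
    with that show ?thesis
      by (simp add: sum.delta)
  qed
  then have "(\<lambda>n. pair (\<Sum>j<n. u j) y) \<longlonglongrightarrow> pair (u j0) y"
    by (intro tendsto_eventually eventually_sequentiallyI[of "Suc j0"]) simp
  moreover have "(\<lambda>n. pair (\<Sum>j<n. u j) y) \<longlonglongrightarrow> pair x y"
    using assms(2) unfolding wsums_def by blast
  ultimately show ?thesis
    using LIMSEQ_unique by metis
qed


locale separating_pairing =
  fixes pair :: "'x::real_normed_vector \<Rightarrow> 'y::real_vector \<Rightarrow> real"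
  assumes bilinear_pair: "bilinear pair"
    and pair_separating: "(\<And>y. pair x y = 0) \<Longrightarrow> x = 0"
begin

lemma linear_pair_scaleR: "linear (\<lambda>x. pair x y *\<^sub>R v)"
  by (intro linearI) (simp_all add: bilinear_ladd[OF bilinear_pair] bilinear_lmul[OF bilinear_pair]
      scaleR_add_left)

lemma wsums_unique:
  assumes "wsums pair u x" "wsums pair u z"
  shows "x = z"
proof -
  have "pair x y = pair z y" for y
    using assms unfolding wsums_def by (meson LIMSEQ_unique)
  then have "pair (x - z) y = 0" for y
    by (simp add: bilinear_lsub[OF bilinear_pair])
  then show ?thesis
    using pair_separating[of "x - z"] by simp
qed

lemma wsum_eqI: "wsums pair u x \<Longrightarrow> wsum pair u = x"
  unfolding wsum_def using wsums_unique by blast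

lemma bounded_linear_wsum:
  assumes linear: "\<And>j. linear (\<lambda>x. S x j)" and "K \<ge> 0"
    and bound: "\<And>x. \<exists>z. wsums pair (S x) z \<and> norm z \<le> K * norm x"
  shows "(\<forall>x. wsums pair (S x) (wsum pair (S x))) \<and> bounded_linear (\<lambda>x. wsum pair (S x))
    \<and> onorm (\<lambda>x. wsum pair (S x)) \<le> K"
proof -
  have sums: "wsums pair (S x) (wsum pair (S x))" and norm: "norm (wsum pair (S x)) \<le> K * norm x" for x
    using bound[of x] wsum_eqI by auto
  have add: "S (x + z) = (\<lambda>j. S x j + S z j)" and scale: "S (c *\<^sub>R x) = (\<lambda>j. c *\<^sub>R S x j)"
    for x z c
    using linear_add[OF linear] linear_scale[OF linear] by auto
  have "wsum pair (S (x + z)) = wsum pair (S x) + wsum pair (S z)" for x z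
    unfolding add by (rule wsum_eqI[OF wsums_add[OF bilinear_pair sums sums]])
  moreover have "wsum pair (S (c *\<^sub>R x)) = c *\<^sub>R wsum pair (S x)" for c x
    unfolding scale by (rule wsum_eqI[OF wsums_scaleR[OF bilinear_pair sums]])
  ultimately have "bounded_linear (\<lambda>x. wsum pair (S x))"
    using norm by (intro bounded_linear_intro[where K = K]) (auto simp: mult.commute)
  with sums norm \<open>K \<ge> 0\<close> show ?thesis
    by (auto intro: onorm_bound)
qed

end


locale subsymmetric_dual_pair =
  fixes pair :: "'x::banach \<Rightarrow> 'y::banach \<Rightarrow> real"
    and e :: "nat \<Rightarrow> 'x" and f :: "nat \<Rightarrow> 'y" and Cu Cs :: real
  assumes dual_pair_basis: "dual_pair_basis pair e f"
    and subsymmetric: "subsymmetric_basis pair e Cu Cs"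
begin

lemma pair_e_f: "pair (e j) (f k) = (if j = k then 1 else 0)"
  and wsums_expansion: "wsums pair (\<lambda>j. pair x (f j) *\<^sub>R e j) x"
  and norm_e: "norm (e j) = 1"
  using dual_pair_basis unfolding dual_pair_basis_def by simp_all

sublocale separating_pairing pair
  using dual_pair_basis unfolding dual_pair_basis_def by unfold_locales auto

lemma Cs_pos: "Cs > 0"
  using subsymmetric unfolding subsymmetric_basis_def spreading_basis_def by blast

lemma unconditional_SUP_bound:
  assumes "\<And>k. \<bar>\<gamma> k\<bar> \<le> 1" "wsums pair (\<lambda>j. a j *\<^sub>R e j) x"
  shows "\<exists>z. wsums pair (\<lambda>j. (\<gamma> j * a j) *\<^sub>R e j) z \<and> norm z \<le> Cu * (SUP k. \<bar>\<gamma> k\<bar>) * norm x"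
proof -
  have "bounded (range \<gamma>)"
    using assms(1) unfolding bounded_iff by auto
  then show ?thesis
    using subsymmetric assms(2)
    unfolding subsymmetric_basis_def unconditional_basis_def by blast
qed

lemma Cu_nonneg: "Cu \<ge> 0"
proof -
  obtain z where "wsums pair (\<lambda>j. (1 * pair (e 0) (f j)) *\<^sub>R e j) z"
    and z: "norm z \<le> Cu * (SUP k::nat. \<bar>1::real\<bar>) * norm (e 0)"
    using unconditional_SUP_bound[of "\<lambda>_. 1", OF _ wsums_expansion] by auto
  then have "z = e 0"
    using wsums_unique wsums_expansion by simp
  with z show ?thesis
    by (simp add: norm_e)
qed

lemma unconditional_bound:
  assumes "\<And>k. \<bar>\<gamma> k\<bar> \<le> 1" "wsums pair (\<lambda>j. a j *\<^sub>R e j) x"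
  shows "\<exists>z. wsums pair (\<lambda>j. (\<gamma> j * a j) *\<^sub>R e j) z \<and> norm z \<le> Cu * norm x"
proof -
  have "Cu * (SUP k. \<bar>\<gamma> k\<bar>) * norm x \<le> Cu * 1 * norm x"
    using assms(1) Cu_nonneg by (intro mult_right_mono mult_left_mono cSUP_least) auto
  then show ?thesis
    using unconditional_SUP_bound[OF assms] by force
qed

lemma spreading_forward:
  assumes "strict_mono n" "wsums pair (\<lambda>j. a j *\<^sub>R e j) x"
  shows "\<exists>z. wsums pair (\<lambda>j. a j *\<^sub>R e (n j)) z \<and> norm z \<le> Cs * norm x"
proof -
  obtain z where "wsums pair (\<lambda>j. a j *\<^sub>R e (n j)) z" "inverse Cs * norm z \<le> norm x"
    using subsymmetric assms unfolding subsymmetric_basis_def spreading_basis_def by blast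
  then show ?thesis
    using Cs_pos by (auto simp: field_simps)
qed

lemma spreading_backward:
  assumes "strict_mono n" "wsums pair (\<lambda>j. a j *\<^sub>R e (n j)) z"
  shows "\<exists>x. wsums pair (\<lambda>j. a j *\<^sub>R e j) x \<and> norm x \<le> Cs * norm z"
  using subsymmetric assms unfolding subsymmetric_basis_def spreading_basis_def by blast

lemma spread_signed_expansion:
  assumes n: "strict_mono n" and \<gamma>: "\<And>k. \<bar>\<gamma> k\<bar> \<le> 1"
  shows "\<exists>z. wsums pair (\<lambda>j. (\<gamma> (n j) * pair x (f j)) *\<^sub>R e (n j)) z \<and> norm z \<le> Cu * Cs * norm x"
proof -
  obtain u where u: "wsums pair (\<lambda>j. (\<gamma> (n j) * pair x (f j)) *\<^sub>R e j) u"
    and norm_u: "norm u \<le> Cu * norm x"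
    using unconditional_bound[where \<gamma> = "\<lambda>j. \<gamma> (n j)", OF \<gamma> wsums_expansion] by blast
  obtain z where z: "wsums pair (\<lambda>j. (\<gamma> (n j) * pair x (f j)) *\<^sub>R e (n j)) z"
    and norm_z: "norm z \<le> Cs * norm u"
    using spreading_forward[OF n u] by blast
  have "norm z \<le> Cu * Cs * norm x"
    using norm_z mult_left_mono[OF norm_u less_imp_le[OF Cs_pos]] by (simp add: mult_ac)
  with z show ?thesis
    by blast
qed

lemma restricted_signed_expansion:
  assumes n: "strict_mono n" and \<gamma>: "\<And>k. \<bar>\<gamma> k\<bar> \<le> 1"
  shows "\<exists>z. wsums pair (\<lambda>j. (\<gamma> (n j) * pair x (f (n j))) *\<^sub>R e j) z \<and> norm z \<le> Cu * Cs * norm x"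
proof -
  define \<delta> where "\<delta> k = (if k \<in> range n then \<gamma> k else 0)" for k
  have "\<bar>\<delta> k\<bar> \<le> 1" for k
    using \<gamma> by (simp add: \<delta>_def)
  then obtain u where u: "wsums pair (\<lambda>k. (\<delta> k * pair x (f k)) *\<^sub>R e k) u"
    and norm_u: "norm u \<le> Cu * norm x"
    using unconditional_bound[where \<gamma> = \<delta>, OF _ wsums_expansion] by blast
  have u_sub: "wsums pair (\<lambda>j. (\<gamma> (n j) * pair x (f (n j))) *\<^sub>R e (n j)) u"
    using wsums_subseq[OF n _ u] by (simp add: \<delta>_def comp_def)
  obtain z where z: "wsums pair (\<lambda>j. (\<gamma> (n j) * pair x (f (n j))) *\<^sub>R e j) z"
    and norm_z: "norm z \<le> Cs * norm u"
    using spreading_backward[OF n u_sub] by blast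
  have "norm z \<le> Cu * Cs * norm x"
    using norm_z mult_left_mono[OF norm_u less_imp_le[OF Cs_pos]] by (simp add: mult_ac)
  with z show ?thesis
    by blast
qed

end


locale blocks =
  fixes Bl :: "nat \<Rightarrow> nat set" and L :: nat
  assumes L_pos: "L \<ge> 1"
    and card_block: "\<And>j. card (Bl j) = L"
    and block_order: "\<And>j. Max (Bl j) < Min (Bl (Suc j))"
begin

lemma finite_block: "finite (Bl j)"
  and block_nonempty: "Bl j \<noteq> {}"
  using card_block[of j] L_pos by (auto intro: card_ge_0_finite)

definition block_elem :: "nat \<Rightarrow> nat \<Rightarrow> nat" where
  "block_elem i j = sorted_list_of_set (Bl j) ! i"

lemma block_elem_in: "i < L \<Longrightarrow> block_elem i j \<in> Bl j"
  unfolding block_elem_def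
  by (metis card_block finite_block length_sorted_list_of_set nth_mem set_sorted_list_of_set)

lemma strict_mono_block_elem:
  assumes "i < L"
  shows "strict_mono (block_elem i)"
  unfolding strict_mono_Suc_iff
proof
  fix j
  have "block_elem i j \<le> Max (Bl j)"
    using block_elem_in[OF assms] finite_block by simp
  also have "\<dots> < Min (Bl (Suc j))"
    by (rule block_order)
  also have "\<dots> \<le> block_elem i (Suc j)"
    using block_elem_in[OF assms] finite_block by simp
  finally show "block_elem i j < block_elem i (Suc j)" .
qed

lemma sum_block: "(\<Sum>k\<in>Bl j. g k) = (\<Sum>i<L. g (block_elem i j))"
proof -
  have "(\<Sum>k\<in>Bl j. g k) = sum_list (map g (sorted_list_of_set (Bl j)))"
    using finite_block by (simp add: sum_list_distinct_conv_sum_set)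
  also have "\<dots> = (\<Sum>i<L. g (block_elem i j))"
    by (simp add: sum_list_sum_nth card_block block_elem_def atLeast0LessThan)
  finally show ?thesis .
qed

lemma strict_mono_Min_block: "strict_mono (\<lambda>j. Min (Bl j))"
  unfolding strict_mono_Suc_iff
  using block_order finite_block block_nonempty by (meson Max_ge Min_in le_less_trans)

lemma block_unique:
  assumes "k \<in> Bl j" "k \<in> Bl j'"
  shows "j = j'"
proof -
  have False if "j < j'" "k \<in> Bl j" "k \<in> Bl j'" for j j'
  proof -
    have "k \<le> Max (Bl j)"
      using that finite_block by simp
    also have "\<dots> < Min (Bl (Suc j))"
      by (rule block_order)
    also have "\<dots> \<le> Min (Bl j')"
      using that strict_mono_less_eq[OF strict_mono_Min_block] by simp
    also have "\<dots> \<le> k"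
      using that finite_block by simp
    finally show False
      by simp
  qed
  with assms show ?thesis
    by (metis linorder_neqE_nat)
qed

end


locale block_operators = subsymmetric_dual_pair pair e f Cu Cs + blocks Bl L
  for pair :: "'x::banach \<Rightarrow> 'y::banach \<Rightarrow> real" and e f Cu Cs Bl L +
  fixes \<epsilon> :: "nat \<Rightarrow> real"
  assumes signs: "\<And>k. \<epsilon> k \<in> {-1, 1}"
begin

definition block_vec :: "nat \<Rightarrow> 'x" where
  "block_vec j = (\<Sum>k\<in>Bl j. \<epsilon> k *\<^sub>R e k)"

definition dual_block_vec :: "nat \<Rightarrow> 'y" where
  "dual_block_vec j = (\<Sum>k\<in>Bl j. \<epsilon> k *\<^sub>R f k)"

definition block_map :: "'x \<Rightarrow> 'x" where
  "block_map = (\<lambda>x. wsum pair (\<lambda>j. pair x (f j) *\<^sub>R block_vec j))"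

definition unblock_map :: "'x \<Rightarrow> 'x" where
  "unblock_map = (\<lambda>x. wsum pair (\<lambda>j. pair x (dual_block_vec j) *\<^sub>R e j))"

lemma abs_sign_le: "\<bar>\<epsilon> k\<bar> \<le> 1"
  and sign_mult_self: "\<epsilon> k * \<epsilon> k = 1"
  using signs[of k] by auto

lemma block_series_bound:
  "\<exists>z. wsums pair (\<lambda>j. pair x (f j) *\<^sub>R block_vec j) z \<and> norm z \<le> Cu * Cs * real L * norm x"
proof -
  have "pair x (f j) *\<^sub>R block_vec j
      = (\<Sum>i<L. (\<epsilon> (block_elem i j) * pair x (f j)) *\<^sub>R e (block_elem i j))" for j
    by (simp add: block_vec_def sum_block scaleR_sum_right mult.commute)
  moreover have "\<exists>z. wsums pair (\<lambda>j. \<Sum>i<L. (\<epsilon> (block_elem i j) * pair x (f j)) *\<^sub>R e (block_elem i j)) z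
      \<and> norm z \<le> real (card {..<L}) * (Cu * Cs * norm x)"
  proof (rule wsums_sum_bounded[OF bilinear_pair])
    fix i
    assume "i \<in> {..<L}"
    then show "\<exists>z. wsums pair (\<lambda>j. (\<epsilon> (block_elem i j) * pair x (f j)) *\<^sub>R e (block_elem i j)) z
        \<and> norm z \<le> Cu * Cs * norm x"
      using spread_signed_expansion[of "block_elem i" \<epsilon> x] strict_mono_block_elem abs_sign_le
      by simp
  qed
  ultimately show ?thesis
    by (simp add: mult_ac)
qed

lemma unblock_series_bound:
  "\<exists>z. wsums pair (\<lambda>j. pair x (dual_block_vec j) *\<^sub>R e j) z \<and> norm z \<le> Cu * Cs * real L * norm x"
proof -
  have "pair x (dual_block_vec j) *\<^sub>R e j
      = (\<Sum>i<L. (\<epsilon> (block_elem i j) * pair x (f (block_elem i j))) *\<^sub>R e j)" for j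
    by (simp add: dual_block_vec_def sum_block bilinear_sum_right[OF bilinear_pair]
        bilinear_rmul[OF bilinear_pair] scaleR_sum_left)
  moreover have "\<exists>z. wsums pair (\<lambda>j. \<Sum>i<L. (\<epsilon> (block_elem i j) * pair x (f (block_elem i j))) *\<^sub>R e j) z
      \<and> norm z \<le> real (card {..<L}) * (Cu * Cs * norm x)"
  proof (rule wsums_sum_bounded[OF bilinear_pair])
    fix i
    assume "i \<in> {..<L}"
    then show "\<exists>z. wsums pair (\<lambda>j. (\<epsilon> (block_elem i j) * pair x (f (block_elem i j))) *\<^sub>R e j) z
        \<and> norm z \<le> Cu * Cs * norm x"
      using restricted_signed_expansion[of "block_elem i" \<epsilon> x] strict_mono_block_elem abs_sign_le
      by simp
  qed
  ultimately show ?thesis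
    by (simp add: mult_ac)
qed

lemma block_bound_nonneg: "Cu * Cs * real L \<ge> 0"
  using Cu_nonneg Cs_pos by simp

lemma block_map_bounded:
  "(\<forall>x. wsums pair (\<lambda>j. pair x (f j) *\<^sub>R block_vec j) (block_map x))
    \<and> bounded_linear block_map \<and> onorm block_map \<le> Cu * Cs * real L"
  unfolding block_map_def
  by (rule bounded_linear_wsum[where S = "\<lambda>x j. pair x (f j) *\<^sub>R block_vec j",
        OF linear_pair_scaleR block_bound_nonneg block_series_bound])

lemma unblock_map_bounded:
  "(\<forall>x. wsums pair (\<lambda>j. pair x (dual_block_vec j) *\<^sub>R e j) (unblock_map x))
    \<and> bounded_linear unblock_map \<and> onorm unblock_map \<le> Cu * Cs * real L"
  unfolding unblock_map_def
  by (rule bounded_linear_wsum[where S = "\<lambda>x j. pair x (dual_block_vec j) *\<^sub>R e j",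
        OF linear_pair_scaleR block_bound_nonneg unblock_series_bound])

lemma pair_block_vec_f: "pair (block_vec j) (f k) = (if k \<in> Bl j then \<epsilon> k else 0)"
  by (simp add: block_vec_def bilinear_sum_left[OF bilinear_pair] bilinear_lmul[OF bilinear_pair]
      pair_e_f finite_block if_distrib[of "\<lambda>t. _ * t"] sum.delta' cong: if_cong)

lemma pair_block_map_f:
  assumes "k \<in> Bl j"
  shows "pair (block_map x) (f k) = \<epsilon> k * pair x (f j)"
proof -
  have "pair (block_map x) (f k) = pair (pair x (f j) *\<^sub>R block_vec j) (f k)"
  proof (rule wsums_pair_single_term[OF bilinear_pair])
    show "wsums pair (\<lambda>j. pair x (f j) *\<^sub>R block_vec j) (block_map x)"
      using block_map_bounded by blast
    show "pair (pair x (f j') *\<^sub>R block_vec j') (f k) = 0" if "j' \<noteq> j" for j'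
      using that assms block_unique by (auto simp: bilinear_lmul[OF bilinear_pair] pair_block_vec_f)
  qed
  with assms show ?thesis
    by (simp add: bilinear_lmul[OF bilinear_pair] pair_block_vec_f)
qed

lemma pair_block_map_dual_block_vec:
  "pair (block_map x) (dual_block_vec j) = real L * pair x (f j)"
proof -
  have "pair (block_map x) (dual_block_vec j) = (\<Sum>k\<in>Bl j. \<epsilon> k * (\<epsilon> k * pair x (f j)))"
    by (simp add: dual_block_vec_def bilinear_sum_right[OF bilinear_pair]
        bilinear_rmul[OF bilinear_pair] pair_block_map_f)
  also have "\<dots> = (\<Sum>k\<in>Bl j. pair x (f j))"
    by (simp add: mult.assoc[symmetric] sign_mult_self)
  finally show ?thesis
    by (simp add: card_block)
qed

lemma unblock_block_map: "unblock_map (block_map x) = real L *\<^sub>R x"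
  unfolding unblock_map_def
  using wsum_eqI[OF wsums_scaleR[OF bilinear_pair wsums_expansion, of "real L"]]
  by (simp add: pair_block_map_dual_block_vec)

end


theorem proposition3p5:
  fixes pair :: "'x::banach \<Rightarrow> 'y::banach \<Rightarrow> real"
    and e :: "nat \<Rightarrow> 'x" and f :: "nat \<Rightarrow> 'y"
    and Cu Cs :: real and L :: nat
    and Bl :: "nat \<Rightarrow> nat set" and \<epsilon> :: "nat \<Rightarrow> real"
  assumes basis: "dual_pair_basis pair e f"
    and subsym: "subsymmetric_basis pair e Cu Cs"
    and L: "L \<ge> 1"
    and card_Bl: "\<And>j. card (Bl j) = L"
    and Bl_order: "\<And>j. Max (Bl j) < Min (Bl (Suc j))"
    and signs: "\<And>k. \<epsilon> k \<in> {-1, 1}"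
  shows "\<exists>B Q :: 'x \<Rightarrow> 'x.
           (\<forall>x. wsums pair (\<lambda>j. pair x (f j) *\<^sub>R (\<Sum>k\<in>Bl j. \<epsilon> k *\<^sub>R e k)) (B x)) \<and>
           (\<forall>x. wsums pair (\<lambda>j. pair x (\<Sum>k\<in>Bl j. \<epsilon> k *\<^sub>R f k) *\<^sub>R e j) (Q x)) \<and>
           bounded_linear B \<and> bounded_linear Q \<and>
           (\<forall>x. Q (B x) = real L *\<^sub>R x) \<and>
           onorm B \<le> Cu * Cs * real L \<and> onorm Q \<le> Cu * Cs * real L"
proof -
  interpret block_operators pair e f Cu Cs Bl L \<epsilon>
    using assms by unfold_locales
  show ?thesis
    using block_map_bounded unblock_map_bounded unblock_block_map
    unfolding block_vec_def dual_block_vec_def by blast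
qed

end
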